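(* Let $B$ be a non-abelian group, $H$ a finitely generated infinite group with fixed finite generating set $X=\{x_1,\dots,x_n\}$, $W=B\wr H$, and fix $a,b\in B$ with $ab\ne ba$. For $S\subseteq H$ define $\bar a,\bar b_S\in B^H$ by $\bar a(1)=a$, $\bar a(x)=1$ for $x\neq1$, and $\bar b_S(x)=b$ for $x\in S$, $\bar b_S(x)=1$ for $x\notin S$; let $G_S\le W$ be the subgroup generated by $H$, $\bar a$, $\bar b_S$, and $Y_S=(x_1,\dots,x_n,\bar a,\bar b_S)$. Then the map $\xi:2^H\to\mathcal G$, $\xi(S)=(G_S,Y_S)$, is injective.
   Context: $B^H$ is the group of all functions $H\to B$ with pointwise multiplication; $B\wr H=B^H\rtimes H$ with $(hfh^{-1})(x)=f(h^{-1}x)$. $2^H$ is the set of subsets of $H$. $\mathcal G$ is the space of finitely generated marked groups: pairs $(G,A)$ with $A$ a finite ordered generating tuple of $G$, where $(G,(a_1,\dots,a_m))\approx(G',(a'_1,\dots,a'_m))$ are identified iff $a_i\mapsto a'_i$ extends to an isomorphism (and a tuple is identified with itself extended by the identity element). *)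

theory Defs
  imports "HOL-Algebra.Algebra" "HOL-Library.FuncSet"
begin

text \<open>Wreath product B wr H = B^H \<rtimes> H, elements (f,h) with f : carrier H \<rightarrow> carrier B
  (extensional), multiplication (f,h)(g,k) = (f * (h g h^-1), hk), where (h g h^-1)(x) = g(h^-1 x).\<close>
definition wreath :: "('b,'m1) monoid_scheme \<Rightarrow> ('h,'m2) monoid_scheme \<Rightarrow> (('h \<Rightarrow> 'b) \<times> 'h) monoid" where
  "wreath B H = \<lparr>carrier = (carrier H \<rightarrow>\<^sub>E carrier B) \<times> carrier H,
     monoid.mult = (\<lambda>(f,h) (g,k). ((\<lambda>x\<in>carrier H. f x \<otimes>\<^bsub>B\<^esub> g (inv\<^bsub>H\<^esub> h \<otimes>\<^bsub>H\<^esub> x)), h \<otimes>\<^bsub>H\<^esub> k)),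
     monoid.one = ((\<lambda>x\<in>carrier H. \<one>\<^bsub>B\<^esub>), \<one>\<^bsub>H\<^esub>)\<rparr>"

definition wr_top :: "('b,'m1) monoid_scheme \<Rightarrow> ('h,'m2) monoid_scheme \<Rightarrow> 'h \<Rightarrow> ('h \<Rightarrow> 'b) \<times> 'h" where
  "wr_top B H h = ((\<lambda>x\<in>carrier H. \<one>\<^bsub>B\<^esub>), h)"

definition abar :: "('b,'m1) monoid_scheme \<Rightarrow> ('h,'m2) monoid_scheme \<Rightarrow> 'b \<Rightarrow> ('h \<Rightarrow> 'b) \<times> 'h" where
  "abar B H a = ((\<lambda>x\<in>carrier H. if x = \<one>\<^bsub>H\<^esub> then a else \<one>\<^bsub>B\<^esub>), \<one>\<^bsub>H\<^esub>)"

definition bbar :: "('b,'m1) monoid_scheme \<Rightarrow> ('h,'m2) monoid_scheme \<Rightarrow> 'b \<Rightarrow> 'h set \<Rightarrow> ('h \<Rightarrow> 'b) \<times> 'h" where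
  "bbar B H b S = ((\<lambda>x\<in>carrier H. if x \<in> S then b else \<one>\<^bsub>B\<^esub>), \<one>\<^bsub>H\<^esub>)"

definition G_S :: "('b,'m1) monoid_scheme \<Rightarrow> ('h,'m2) monoid_scheme \<Rightarrow> 'b \<Rightarrow> 'b \<Rightarrow> 'h set \<Rightarrow> (('h \<Rightarrow> 'b) \<times> 'h) monoid" where
  "G_S B H a b S = (wreath B H)\<lparr>carrier := generate (wreath B H)
      (wr_top B H ` carrier H \<union> {abar B H a, bbar B H b S})\<rparr>"

definition Y_S :: "('b,'m1) monoid_scheme \<Rightarrow> ('h,'m2) monoid_scheme \<Rightarrow> 'h list \<Rightarrow> 'b \<Rightarrow> 'b \<Rightarrow> 'h set \<Rightarrow> (('h \<Rightarrow> 'b) \<times> 'h) list" where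
  "Y_S B H xs a b S = map (wr_top B H) xs @ [abar B H a, bbar B H b S]"

text \<open>Equality in the space of marked groups (for tuples of equal length):
  (G,A) and (G',A') are identified iff a_i \<mapsto> a'_i extends to an isomorphism.\<close>
definition marked_eq :: "('a,'m) monoid_scheme \<Rightarrow> 'a list \<Rightarrow> ('c,'n) monoid_scheme \<Rightarrow> 'c list \<Rightarrow> bool" where
  "marked_eq G A G' A' \<longleftrightarrow> length A = length A' \<and>
     (\<exists>\<phi> \<in> iso G G'. \<forall>i < length A. \<phi> (A ! i) = A' ! i)"

end

theory Submission
  imports Defs
begin

(* An isomorphism of marked groups (G_S, Y_S) -> (G_S', Y_S') fixes the generators of H and abar,
   hence fixes the whole top copy of H, and it sends bbar_S to bbar_S'.  Conjugating bbar_S by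
   h^-1 gives bbar of the translate h^-1 S, which commutes with abar exactly when 1 is not in
   h^-1 S, i.e. when h is not in S (this is where ab <> ba enters).  Commutation is preserved by
   the isomorphism, so h is in S iff h is in S'. *)

lemma wreath_carrier: "carrier (wreath B H) = (carrier H \<rightarrow>\<^sub>E carrier B) \<times> carrier H"
  by (simp add: wreath_def)

lemma wreath_mult:
  "(f, h) \<otimes>\<^bsub>wreath B H\<^esub> (g, k) =
     ((\<lambda>x\<in>carrier H. f x \<otimes>\<^bsub>B\<^esub> g (inv\<^bsub>H\<^esub> h \<otimes>\<^bsub>H\<^esub> x)), h \<otimes>\<^bsub>H\<^esub> k)"
  by (simp add: wreath_def)

lemma wreath_one: "\<one>\<^bsub>wreath B H\<^esub> = ((\<lambda>x\<in>carrier H. \<one>\<^bsub>B\<^esub>), \<one>\<^bsub>H\<^esub>)"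
  by (simp add: wreath_def)

lemma wreath_group:
  assumes "group B" and "group H"
  shows "group (wreath B H)"
proof -
  interpret B: group B by fact
  interpret H: group H by fact
  show ?thesis
  proof (rule groupI)
    show "\<one>\<^bsub>wreath B H\<^esub> \<in> carrier (wreath B H)"
      by (auto simp: wreath_one wreath_carrier)
  next
    fix x y assume "x \<in> carrier (wreath B H)" and "y \<in> carrier (wreath B H)"
    then show "x \<otimes>\<^bsub>wreath B H\<^esub> y \<in> carrier (wreath B H)"
      by (auto simp: wreath_mult wreath_carrier PiE_iff)
  next
    fix x y z
    assume "x \<in> carrier (wreath B H)" "y \<in> carrier (wreath B H)" "z \<in> carrier (wreath B H)"
    then show "x \<otimes>\<^bsub>wreath B H\<^esub> y \<otimes>\<^bsub>wreath B H\<^esub> z = x \<otimes>\<^bsub>wreath B H\<^esub> (y \<otimes>\<^bsub>wreath B H\<^esub> z)"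
      by (auto simp: wreath_mult wreath_carrier PiE_iff H.inv_mult_group H.m_assoc B.m_assoc
          intro!: ext)
  next
    fix x assume "x \<in> carrier (wreath B H)"
    then obtain f h where x_eq: "x = (f, h)" and f: "f \<in> carrier H \<rightarrow>\<^sub>E carrier B"
      and h: "h \<in> carrier H"
      by (auto simp: wreath_carrier)
    show "\<one>\<^bsub>wreath B H\<^esub> \<otimes>\<^bsub>wreath B H\<^esub> x = x"
      using f h by (auto simp: x_eq wreath_one wreath_mult PiE_iff extensional_def intro!: ext)
    let ?y = "((\<lambda>u\<in>carrier H. inv\<^bsub>B\<^esub> f (h \<otimes>\<^bsub>H\<^esub> u)), inv\<^bsub>H\<^esub> h)"
    have "?y \<in> carrier (wreath B H)"
      using f h by (auto simp: wreath_carrier PiE_iff)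
    moreover have "?y \<otimes>\<^bsub>wreath B H\<^esub> x = \<one>\<^bsub>wreath B H\<^esub>"
      using f h by (auto simp: x_eq wreath_one wreath_mult PiE_iff H.m_assoc[symmetric] intro!: ext)
    ultimately show "\<exists>y\<in>carrier (wreath B H). y \<otimes>\<^bsub>wreath B H\<^esub> x = \<one>\<^bsub>wreath B H\<^esub>"
      by blast
  qed
qed

lemma wr_top_hom:
  assumes "group B" and "group H"
  shows "wr_top B H \<in> hom H (wreath B H)"
proof -
  interpret B: group B by fact
  interpret H: group H by fact
  show ?thesis
    by (auto simp: hom_def wr_top_def wreath_carrier wreath_mult intro!: ext)
qed

lemma G_S_eq_subgroup_generated:
  assumes "group B" and "group H" and "a \<in> carrier B" and "b \<in> carrier B"
  shows "G_S B H a b S =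
    subgroup_generated (wreath B H) (wr_top B H ` carrier H \<union> {abar B H a, bbar B H b S})"
proof -
  have "wr_top B H ` carrier H \<union> {abar B H a, bbar B H b S} \<subseteq> carrier (wreath B H)"
    using assms hom_carrier[OF wr_top_hom[OF assms(1,2)]]
    by (auto simp: abar_def bbar_def wreath_carrier group.is_monoid)
  then show ?thesis
    by (simp add: G_S_def subgroup_generated_def Int_absorb1)
qed

lemma mult_G_S [simp]: "x \<otimes>\<^bsub>G_S B H a b S\<^esub> y = x \<otimes>\<^bsub>wreath B H\<^esub> y"
  by (simp add: G_S_def)

lemma G_S_group:
  assumes "group B" and "group H" and "a \<in> carrier B" and "b \<in> carrier B"
  shows "group (G_S B H a b S)"
  using assms by (simp add: G_S_eq_subgroup_generated group.group_subgroup_generated wreath_group)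

lemma generators_subset_carrier_G_S:
  "wr_top B H ` carrier H \<union> {abar B H a, bbar B H b S} \<subseteq> carrier (G_S B H a b S)"
  by (auto simp: G_S_def intro: generate.incl)

lemma wr_top_hom_G_S:
  assumes "group B" and "group H" and "a \<in> carrier B" and "b \<in> carrier B"
  shows "wr_top B H \<in> hom H (G_S B H a b S)"
  unfolding G_S_eq_subgroup_generated[OF assms]
  by (rule hom_into_subgroup[OF wr_top_hom[OF assms(1,2)]]) blast

lemma hom_eq_on_generate:
  assumes "group G" and "f \<in> hom G K" and "g \<in> hom G K" and "group K"
    and "A \<subseteq> carrier G" and "\<And>x. x \<in> A \<Longrightarrow> f x = g x"
    and "x \<in> generate G A"
  shows "f x = g x"
  using assms(7)
proof (induction x rule: generate.induct)
  case one
  then show ?case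
    using assms(1-4) by (simp add: group_hom.hom_one group_hom_axioms_def group_hom_def)
next
  case (incl h)
  then show ?case by (rule assms(6))
next
  case (inv h)
  then have "h \<in> carrier G" using assms(5) by blast
  then show ?case
    using assms(1-4,6) inv by (simp add: group_hom.hom_inv group_hom_axioms_def group_hom_def)
next
  case (eng h k)
  then have "h \<in> carrier G" "k \<in> carrier G"
    using group.generate_in_carrier[OF assms(1,5)] by auto
  then show ?case
    using assms(2,3) eng by (simp add: hom_mult)
qed

lemma inj_hom_commute_iff:
  assumes "group G" and "\<phi> \<in> hom G K" and "inj_on \<phi> (carrier G)"
    and "x \<in> carrier G" and "y \<in> carrier G"
  shows "\<phi> x \<otimes>\<^bsub>K\<^esub> \<phi> y = \<phi> y \<otimes>\<^bsub>K\<^esub> \<phi> x \<longleftrightarrow> x \<otimes>\<^bsub>G\<^esub> y = y \<otimes>\<^bsub>G\<^esub> x"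
  using assms by (metis group.is_monoid hom_mult inj_onD monoid.m_closed)

lemma one_mem_l_coset_inv_iff:
  assumes "group H" and "S \<subseteq> carrier H" and "h \<in> carrier H"
  shows "\<one>\<^bsub>H\<^esub> \<in> inv\<^bsub>H\<^esub> h <#\<^bsub>H\<^esub> S \<longleftrightarrow> h \<in> S"
proof -
  interpret H: group H by fact
  have "\<one>\<^bsub>H\<^esub> = inv\<^bsub>H\<^esub> h \<otimes>\<^bsub>H\<^esub> s \<longleftrightarrow> s = h" if "s \<in> S" for s
    using that assms(2,3) by (metis H.inv_inv H.inv_closed H.inv_equality H.r_inv subsetD)
  then show ?thesis
    by (auto simp: l_coset_def)
qed

lemma wr_top_conj_bbar:
  assumes "group B" and "group H" and "b \<in> carrier B" and "S \<subseteq> carrier H" and "h \<in> carrier H"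
  shows "wr_top B H (inv\<^bsub>H\<^esub> h) \<otimes>\<^bsub>wreath B H\<^esub> bbar B H b S \<otimes>\<^bsub>wreath B H\<^esub> wr_top B H h
    = bbar B H b (inv\<^bsub>H\<^esub> h <#\<^bsub>H\<^esub> S)"
proof -
  interpret B: group B by fact
  interpret H: group H by fact
  have "h \<otimes>\<^bsub>H\<^esub> x \<in> S \<longleftrightarrow> x \<in> inv\<^bsub>H\<^esub> h <#\<^bsub>H\<^esub> S" if "x \<in> carrier H" for x
    using that assms(4,5) by (force simp: l_coset_def H.m_assoc[symmetric])
  then show ?thesis
    using assms(3,5) by (auto simp: wr_top_def bbar_def wreath_mult intro!: ext)
qed

lemma abar_commute_bbar_iff:
  assumes "group B" and "group H" and "a \<in> carrier B" and "b \<in> carrier B"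
  shows "abar B H a \<otimes>\<^bsub>wreath B H\<^esub> bbar B H b T = bbar B H b T \<otimes>\<^bsub>wreath B H\<^esub> abar B H a
    \<longleftrightarrow> (\<one>\<^bsub>H\<^esub> \<in> T \<longrightarrow> a \<otimes>\<^bsub>B\<^esub> b = b \<otimes>\<^bsub>B\<^esub> a)"
proof -
  interpret B: group B by fact
  interpret H: group H by fact
  show ?thesis
    using assms(3,4) by (auto simp: abar_def bbar_def wreath_mult fun_eq_iff)
qed

lemma abar_commute_conj_bbar_iff:
  assumes "group B" and "group H" and "a \<in> carrier B" and "b \<in> carrier B"
    and "a \<otimes>\<^bsub>B\<^esub> b \<noteq> b \<otimes>\<^bsub>B\<^esub> a" and "S \<subseteq> carrier H" and "h \<in> carrier H"
  defines "c \<equiv> wr_top B H (inv\<^bsub>H\<^esub> h) \<otimes>\<^bsub>wreath B H\<^esub> bbar B H b S \<otimes>\<^bsub>wreath B H\<^esub> wr_top B H h"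
  shows "abar B H a \<otimes>\<^bsub>wreath B H\<^esub> c = c \<otimes>\<^bsub>wreath B H\<^esub> abar B H a \<longleftrightarrow> h \<notin> S"
  unfolding c_def wr_top_conj_bbar[OF assms(1,2,4,6,7)] abar_commute_bbar_iff[OF assms(1-4)]
    one_mem_l_coset_inv_iff[OF assms(2,6,7)]
  using assms(5) by blast

lemma marked_eq_G_S_isoE:
  assumes "group B" and "group H" and "a \<in> carrier B" and "b \<in> carrier B"
    and "set xs \<subseteq> carrier H" and "generate H (set xs) = carrier H"
    and "marked_eq (G_S B H a b S) (Y_S B H xs a b S) (G_S B H a b S') (Y_S B H xs a b S')"
  obtains \<phi> where "\<phi> \<in> iso (G_S B H a b S) (G_S B H a b S')"
    and "\<And>h. h \<in> carrier H \<Longrightarrow> \<phi> (wr_top B H h) = wr_top B H h"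
    and "\<phi> (abar B H a) = abar B H a" and "\<phi> (bbar B H b S) = bbar B H b S'"
proof -
  obtain \<phi> where iso: "\<phi> \<in> iso (G_S B H a b S) (G_S B H a b S')"
    and maps: "\<And>i. i < length xs + 2 \<Longrightarrow> \<phi> (Y_S B H xs a b S ! i) = Y_S B H xs a b S' ! i"
    using assms(7) by (auto simp: marked_eq_def Y_S_def)
  have fixes_xs: "\<phi> (wr_top B H x) = wr_top B H x" if x: "x \<in> set xs" for x
  proof -
    obtain i where "i < length xs" and "xs ! i = x"
      using x by (auto simp: in_set_conv_nth)
    then show ?thesis
      using maps[of i] by (simp add: Y_S_def nth_append)
  qed
  have top_hom: "\<phi> \<circ> wr_top B H \<in> hom H (G_S B H a b S')"
    using wr_top_hom_G_S[OF assms(1-4)] iso_imp_homomorphism[OF iso] by (rule hom_compose)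
  have "(\<phi> \<circ> wr_top B H) h = wr_top B H h" if "h \<in> carrier H" for h
    by (rule hom_eq_on_generate[OF assms(2) top_hom wr_top_hom_G_S[OF assms(1-4)]
          G_S_group[OF assms(1-4)] assms(5)])
      (use fixes_xs that assms(6) in auto)
  moreover have "\<phi> (abar B H a) = abar B H a" and "\<phi> (bbar B H b S) = bbar B H b S'"
    using maps[of "length xs"] maps[of "Suc (length xs)"] by (simp_all add: Y_S_def nth_append)
  ultimately show thesis
    using that iso by simp
qed

lemma G_S_iso_mem_iff:
  assumes "group B" and "group H" and "a \<in> carrier B" and "b \<in> carrier B"
    and "a \<otimes>\<^bsub>B\<^esub> b \<noteq> b \<otimes>\<^bsub>B\<^esub> a" and "S \<subseteq> carrier H" and "S' \<subseteq> carrier H"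
    and iso: "\<phi> \<in> iso (G_S B H a b S) (G_S B H a b S')"
    and top: "\<And>h. h \<in> carrier H \<Longrightarrow> \<phi> (wr_top B H h) = wr_top B H h"
    and abar: "\<phi> (abar B H a) = abar B H a" and bbar: "\<phi> (bbar B H b S) = bbar B H b S'"
    and h: "h \<in> carrier H"
  shows "h \<in> S \<longleftrightarrow> h \<in> S'"
proof -
  let ?W = "wreath B H" and ?G = "G_S B H a b S"
  let ?c = "\<lambda>T. wr_top B H (inv\<^bsub>H\<^esub> h) \<otimes>\<^bsub>?W\<^esub> bbar B H b T \<otimes>\<^bsub>?W\<^esub> wr_top B H h"
  interpret H: group H by fact
  interpret G: group ?G by (rule G_S_group[OF assms(1-4)])
  have "inv\<^bsub>H\<^esub> h \<in> carrier H"
    using h by simp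
  then have gens: "wr_top B H (inv\<^bsub>H\<^esub> h) \<in> carrier ?G" "wr_top B H h \<in> carrier ?G"
    "abar B H a \<in> carrier ?G" "bbar B H b S \<in> carrier ?G"
    using generators_subset_carrier_G_S[of B H a b S] h by auto
  have c_in: "?c S \<in> carrier ?G"
    using G.m_closed[OF G.m_closed[OF gens(1,4)] gens(2)] by simp
  have hom: "\<phi> \<in> hom ?G (G_S B H a b S')" and inj: "inj_on \<phi> (carrier ?G)"
    using iso by (auto simp: iso_def bij_betw_def)
  have "\<phi> (?c S) = ?c S'"
    using hom_mult[OF hom G.m_closed[OF gens(1,4)] gens(2)] hom_mult[OF hom gens(1,4)]
      top[OF h] top[OF H.inv_closed[OF h]] bbar
    by simp
  then have "abar B H a \<otimes>\<^bsub>?W\<^esub> ?c S' = ?c S' \<otimes>\<^bsub>?W\<^esub> abar B H a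
      \<longleftrightarrow> abar B H a \<otimes>\<^bsub>?W\<^esub> ?c S = ?c S \<otimes>\<^bsub>?W\<^esub> abar B H a"
    using inj_hom_commute_iff[OF G.is_group hom inj gens(3) c_in] abar by simp
  then show ?thesis
    unfolding abar_commute_conj_bbar_iff[OF assms(1-6) h] abar_commute_conj_bbar_iff[OF assms(1-5,7) h]
    by blast
qed

theorem lemma3p4:
  fixes B :: "('b,'m1) monoid_scheme" and H :: "('h,'m2) monoid_scheme"
    and xs :: "'h list" and a b :: 'b
  assumes "group B" and "group H"
    and "set xs \<subseteq> carrier H" and "generate H (set xs) = carrier H"
    and "infinite (carrier H)"
    and "a \<in> carrier B" and "b \<in> carrier B" and "a \<otimes>\<^bsub>B\<^esub> b \<noteq> b \<otimes>\<^bsub>B\<^esub> a"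
  shows "\<forall>S S'. S \<subseteq> carrier H \<longrightarrow> S' \<subseteq> carrier H \<longrightarrow>
           marked_eq (G_S B H a b S) (Y_S B H xs a b S) (G_S B H a b S') (Y_S B H xs a b S')
           \<longrightarrow> S = S'"
proof (intro allI impI)
  fix S S' assume S: "S \<subseteq> carrier H" and S': "S' \<subseteq> carrier H"
    and "marked_eq (G_S B H a b S) (Y_S B H xs a b S) (G_S B H a b S') (Y_S B H xs a b S')"
  then obtain \<phi> where "\<phi> \<in> iso (G_S B H a b S) (G_S B H a b S')"
    and "\<And>h. h \<in> carrier H \<Longrightarrow> \<phi> (wr_top B H h) = wr_top B H h"
    and "\<phi> (abar B H a) = abar B H a" and "\<phi> (bbar B H b S) = bbar B H b S'"
    using marked_eq_G_S_isoE[OF assms(1,2,6,7,3,4)] by blast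
  then have "h \<in> S \<longleftrightarrow> h \<in> S'" if "h \<in> carrier H" for h
    using G_S_iso_mem_iff[OF assms(1,2,6-8) S S'] that by blast
  then show "S = S'"
    using S S' by blast
qed

end
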